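(* Let $P\subset\mathbb{R}^n$ be the moment polytope of a compact toric manifold, with the notation of the context. Then every formal series of the form $$\sum_{k=1}^{\infty}a_k\,\mathfrak w_1^{e_{k,1}}\cdots\mathfrak w_m^{e_{k,m}}\,w_{m+1}^{e_{k,m+1}}\cdots w_B^{e_{k,B}}\,z_1^{f_{k,1}}\cdots z_m^{f_{k,m}},$$ where $a_k\in\Lambda_0$, $\lim_{k\to\infty}\mathfrak v_T(a_k)=\infty$, $e_{k,i}\in\mathbb{Z}$ for $i\le m$, $e_{k,i}\in\mathbb{Z}_{\ge0}$ for $i>m$, and $f_{k,j}\in\mathbb{Z}_{\ge0}$, is an element of $\Lambda_0^P\langle\!\langle\mathfrak w,\mathfrak w^{-1},w,y,y^{-1}\rangle\!\rangle$. Conversely, every element of $\Lambda_0^P\langle\!\langle\mathfrak w,\mathfrak w^{-1},w,y,y^{-1}\rangle\!\rangle$ can be written as a series of this form.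
   Context: $R$ is a field containing $\mathbb{Q}$. $\Lambda$ is the universal Novikov field of formal sums $\sum_i a_iT^{\lambda_i}$ with $a_i\in R$, $\lambda_i\in\mathbb{R}$ increasing to $\infty$; $\mathfrak v_T(\sum a_iT^{\lambda_i})=\inf\{\lambda_i: a_i\ne0\}$; $\Lambda_0=\{x:\mathfrak v_T(x)\ge0\}$. The polytope: $P=\{u\in\mathbb{R}^n:\ \ell_j(u)\ge0,\ j=1,\dots,m\}$, $\ell_j(u)=\langle\vec v_j,u\rangle-\lambda_j$, with $\vec v_j=(v_{j,1},\dots,v_{j,n})\in\mathbb{Z}^n$ the primitive inward normals to the $m$ facets; $P$ is a Delzant polytope (the moment polytope of a compact toric manifold: each vertex lies on exactly $n$ facets whose normals form a $\mathbb{Z}$-basis of $\mathbb{Z}^n$). Fix an integer $B\ge m$. Consider the ring $\Lambda[\mathfrak w_1^{\pm1},\dots,\mathfrak w_m^{\pm1},w_{m+1},\dots,w_B,y_1^{\pm1},\dots,y_n^{\pm1}]$. For $u\in\operatorname{Int}P$ define $\mathfrak v_T^u\big(\sum_k a_k\,\mathfrak w^{e_k}w^{e'_k}y_1^{f_{k,1}}\cdots y_n^{f_{k,n}}\big)=\inf_k\{\mathfrak v_T(a_k)+\langle f_k,u\rangle: a_k\neq0\}$ (the variables $\mathfrak w,w$ have weight $0$), and $\mathfrak v_T^P(x)=\inf\{\mathfrak v_T^u(x): u\in\operatorname{Int}P\}$, a non-Archimedean valuation. $\Lambda^P\langle\!\langle\mathfrak w,\mathfrak w^{-1},w,y,y^{-1}\rangle\!\rangle$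 denotes the completion with respect to $\mathfrak v_T^P$, and $\Lambda_0^P\langle\!\langle\mathfrak w,\mathfrak w^{-1},w,y,y^{-1}\rangle\!\rangle=\{x:\mathfrak v_T^P(x)\ge0\}$. Finally, $z_j=T^{-\lambda_j}y_1^{v_{j,1}}\cdots y_n^{v_{j,n}}$ for $j=1,\dots,m$ (so that $\mathfrak v_T^u(z_j)=\ell_j(u)$). *)

theory Defs
  imports "HOL-Analysis.Analysis"
begin

text \<open>Universal Novikov field over R: an element is a coefficient function
  real => R (coefficient of T^lambda) whose support meets every half-line
  below C in a finite set (i.e. the exponents increase to infinity).\<close>

definition novikov :: "(real \<Rightarrow> 'r::zero) \<Rightarrow> bool" where
  "novikov a \<longleftrightarrow> (\<forall>C. finite {l. a l \<noteq> 0 \<and> l \<le> C})"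

text \<open>T-adic valuation, with value infinity at 0.\<close>
definition vT :: "(real \<Rightarrow> 'r::zero) \<Rightarrow> ereal" where
  "vT a = (INF l\<in>{l. a l \<noteq> 0}. ereal l)"

definition rvec :: "int^'n \<Rightarrow> real^'n" where
  "rvec f = (\<chi> i. real_of_int (f $ i))"

text \<open>Facets are indexed by j < m (0-based); ell j u = <v_j,u> - lambda_j.\<close>
definition ell :: "(nat \<Rightarrow> int^'n) \<Rightarrow> (nat \<Rightarrow> real) \<Rightarrow> nat \<Rightarrow> real^'n \<Rightarrow> real" where
  "ell v lam j u = rvec (v j) \<bullet> u - lam j"

definition polytopeP :: "nat \<Rightarrow> (nat \<Rightarrow> int^'n) \<Rightarrow> (nat \<Rightarrow> real) \<Rightarrow> (real^'n) set" where
  "polytopeP m v lam = {u. \<forall>j<m. ell v lam j u \<ge> 0}"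

definition delzant :: "nat \<Rightarrow> (nat \<Rightarrow> int^'n) \<Rightarrow> (nat \<Rightarrow> real) \<Rightarrow> bool" where
  "delzant m v lam \<longleftrightarrow>
     (let P = polytopeP m v lam in
       bounded P \<and> interior P \<noteq> {} \<and>
       (\<forall>j<m. {u\<in>P. ell v lam j u = 0} facet_of P) \<and>
       (\<forall>j<m. \<forall>k<m. {u\<in>P. ell v lam j u = 0} = {u\<in>P. ell v lam k u = 0} \<longrightarrow> j = k) \<and>
       (\<forall>F. F facet_of P \<longrightarrow> (\<exists>j<m. F = {u\<in>P. ell v lam j u = 0})) \<and>
       (\<forall>j<m. \<forall>d::int. d > 0 \<longrightarrow> (\<forall>i. d dvd (v j $ i)) \<longrightarrow> d = 1) \<and>
       (\<forall>p. p extreme_point_of P \<longrightarrow>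
          (let J = {j. j < m \<and> ell v lam j p = 0} in
             card J = CARD('n) \<and>
             (\<forall>x::int^'n. \<exists>c::nat \<Rightarrow> int. x = (\<Sum>j\<in>J. c j *s v j)) \<and>
             (\<forall>c::nat \<Rightarrow> int. (\<Sum>j\<in>J. c j *s v j) = 0 \<longrightarrow> (\<forall>j\<in>J. c j = 0)))))"

text \<open>Weight of y^f for the valuation v_T^P: inf over Int P of <f,u>.\<close>
definition wtP :: "(real^'n) set \<Rightarrow> int^'n \<Rightarrow> real" where
  "wtP P f = (INF u\<in>interior P. rvec f \<bullet> u)"

text \<open>Exponent vectors of the variables frak w_1..frak w_m (indices 0..m-1, in Z)
  and w_(m+1)..w_B (indices m..B-1, nonnegative).\<close>
definition admissible_exp :: "nat \<Rightarrow> nat \<Rightarrow> (nat \<Rightarrow> int) \<Rightarrow> bool" where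
  "admissible_exp m B E \<longleftrightarrow> (\<forall>i. (B \<le> i \<longrightarrow> E i = 0) \<and> (m \<le> i \<and> i < B \<longrightarrow> 0 \<le> E i))"

text \<open>An element of the completion is represented by its coefficient function:
  x (mu, E, f) = coefficient of T^mu frak w^E w^E y^f.  The valuation v_T^P is
  the minimum over the support of mu + wtP f.\<close>
definition valP :: "(real^'n) set \<Rightarrow> (real \<times> (nat \<Rightarrow> int) \<times> (int^'n) \<Rightarrow> 'r::zero) \<Rightarrow> ereal" where
  "valP P x = (INF k\<in>{k. x k \<noteq> 0}. ereal (fst k + wtP P (snd (snd k))))"

text \<open>The completion Lambda^P<<frak w, frak w^-1, w, y, y^-1>>: formal series whose
  terms have v_T^P-valuation tending to infinity.\<close>
definition completionP :: "(real^'n) set \<Rightarrow> nat \<Rightarrow> nat \<Rightarrow>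
    (real \<times> (nat \<Rightarrow> int) \<times> (int^'n) \<Rightarrow> 'r::zero) set" where
  "completionP P m B = {x.
     (\<forall>k. x k \<noteq> 0 \<longrightarrow> admissible_exp m B (fst (snd k))) \<and>
     (\<forall>C. finite {k. x k \<noteq> 0 \<and> fst k + wtP P (snd (snd k)) \<le> C})}"

definition completion0P :: "(real^'n) set \<Rightarrow> nat \<Rightarrow> nat \<Rightarrow>
    (real \<times> (nat \<Rightarrow> int) \<times> (int^'n) \<Rightarrow> 'r::zero) set" where
  "completion0P P m B = {x \<in> completionP P m B. valP P x \<ge> 0}"

text \<open>The term a * frak w^E w^E z_1^F_1 ... z_m^F_m, with
  z_j = T^(-lambda_j) y^(v_j), as a coefficient function.\<close>
definition series_term :: "nat \<Rightarrow> (nat \<Rightarrow> int^'n) \<Rightarrow> (nat \<Rightarrow> real) \<Rightarrow>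
    (real \<Rightarrow> 'r::zero) \<Rightarrow> (nat \<Rightarrow> int) \<Rightarrow> (nat \<Rightarrow> nat) \<Rightarrow>
    (real \<times> (nat \<Rightarrow> int) \<times> (int^'n) \<Rightarrow> 'r)" where
  "series_term m v lam a E F = (\<lambda>(mu, E', f).
     if E' = E \<and> f = (\<Sum>j<m. of_nat (F j) *s v j)
     then a (mu + (\<Sum>j<m. real (F j) * lam j)) else 0)"

definition series_data :: "nat \<Rightarrow> nat \<Rightarrow> (nat \<Rightarrow> real \<Rightarrow> 'r::zero) \<Rightarrow>
    (nat \<Rightarrow> nat \<Rightarrow> int) \<Rightarrow> bool" where
  "series_data m B a E \<longleftrightarrow>
     (\<forall>k. novikov (a k) \<and> vT (a k) \<ge> 0 \<and> admissible_exp m B (E k)) \<and>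
     ((\<lambda>k. vT (a k)) \<longlonglongrightarrow> \<infinity>)"

definition series_converges_to :: "(real^'n) set \<Rightarrow> nat \<Rightarrow> (nat \<Rightarrow> int^'n) \<Rightarrow> (nat \<Rightarrow> real) \<Rightarrow>
    (nat \<Rightarrow> real \<Rightarrow> 'r::ab_group_add) \<Rightarrow> (nat \<Rightarrow> nat \<Rightarrow> int) \<Rightarrow> (nat \<Rightarrow> nat \<Rightarrow> nat) \<Rightarrow>
    (real \<times> (nat \<Rightarrow> int) \<times> (int^'n) \<Rightarrow> 'r) \<Rightarrow> bool" where
  "series_converges_to P m v lam a E F x \<longleftrightarrow>
     ((\<lambda>N. valP P (\<lambda>key. x key - (\<Sum>k<N. series_term m v lam (a k) (E k) (F k) key))) \<longlonglongrightarrow> \<infinity>)"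

end

theory Submission
  imports Defs
begin

text \<open>On the polytope every z-monomial has nonnegative valuation, since
  \<open>v\<^sub>T\<^sup>u(z\<^sup>F) = \<Sum>\<^sub>j F\<^sub>j \<ell>\<^sub>j(u) \<ge> 0\<close>; hence a series as in the statement
  converges to an element of \<open>\<Lambda>\<^sub>0\<^sup>P\<close>. Conversely, for \<open>f \<in> \<int>\<^sup>n\<close> let \<open>p\<close> be a vertex of
  \<open>P\<close> at which \<open>\<langle>f,\<cdot>\<rangle>\<close> is minimal. The normals of the facets through \<open>p\<close> form a
  \<open>\<int>\<close>-basis, and minimality forces the coefficients of \<open>f\<close> in this basis to be
  nonnegative, so \<open>y\<^sup>f = T\<^sup>c z\<^sup>F\<close> with \<open>c = \<langle>f,p\<rangle> = v\<^sub>T\<^sup>P(y\<^sup>f)\<close>. Rewriting every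
  monomial of an element of \<open>\<Lambda>\<^sub>0\<^sup>P\<close> this way and enumerating its countable support
  yields the required series.\<close>

lemma rvec_add: "rvec (a + b) = rvec a + rvec b"
  by (simp add: rvec_def vec_eq_iff)

lemma rvec_zero [simp]: "rvec 0 = 0"
  by (simp add: rvec_def vec_eq_iff)

lemma rvec_smult: "rvec (c *s a) = real_of_int c *\<^sub>R rvec a"
  by (simp add: rvec_def vec_eq_iff)

lemma rvec_sum: "rvec (\<Sum>j\<in>A. g j) = (\<Sum>j\<in>A. rvec (g j))"
  by (induction A rule: infinite_finite_induct) (auto simp: rvec_add)

lemma inner_rvec_sum_smult:
  "rvec (\<Sum>j\<in>A. c j *s w j) \<bullet> u = (\<Sum>j\<in>A. real_of_int (c j) * (rvec (w j) \<bullet> u))"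
  by (simp add: rvec_sum rvec_smult inner_sum_left)

lemma span_rvec_eq_UNIV:
  fixes w :: "nat \<Rightarrow> int^'n"
  assumes "\<And>x::int^'n. \<exists>c. x = (\<Sum>j\<in>J. c j *s w j)"
  shows "span ((\<lambda>j. rvec (w j)) ` J) = UNIV"
proof -
  have "axis i 1 \<in> span ((\<lambda>j. rvec (w j)) ` J)" for i
  proof -
    obtain c where c: "axis i (1::int) = (\<Sum>j\<in>J. c j *s w j)" using assms by blast
    have "axis i (1::real) = rvec (axis i 1)" by (simp add: rvec_def axis_def vec_eq_iff)
    also have "\<dots> = (\<Sum>j\<in>J. real_of_int (c j) *\<^sub>R rvec (w j))" by (simp add: c rvec_sum rvec_smult)
    finally show ?thesis by (simp add: span_base span_scale span_sum)
  qed
  then have "Basis \<subseteq> span ((\<lambda>j. rvec (w j)) ` J)" by (auto simp: Basis_vec_def)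
  then show ?thesis using span_Basis span_mono span_span by (metis top.extremum_uniqueI)
qed

subsection \<open>Lattice points as nonnegative combinations of facet normals\<close>

lemma polytopeP_eq_Inter_halfspaces:
  "polytopeP m v lam = (\<Inter>j\<in>{..<m}. {u. lam j \<le> rvec (v j) \<bullet> u})"
  by (auto simp: polytopeP_def ell_def)

lemma closed_polytopeP: "closed (polytopeP m v lam)"
  unfolding polytopeP_eq_Inter_halfspaces by (auto intro!: closed_halfspace_ge)

lemma convex_polytopeP: "convex (polytopeP m v lam)"
  unfolding polytopeP_eq_Inter_halfspaces by (auto intro!: convex_INT convex_halfspace_ge)

lemma ell_add_scaleR: "ell v lam j (p + t *\<^sub>R d) = ell v lam j p + t * (rvec (v j) \<bullet> d)"
  by (simp add: ell_def inner_add_right)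

lemma exists_step_into_polytopeP:
  assumes p: "p \<in> polytopeP m v lam"
    and d: "\<And>j. j < m \<Longrightarrow> ell v lam j p = 0 \<Longrightarrow> 0 \<le> rvec (v j) \<bullet> d"
  obtains t where "0 < t" "p + t *\<^sub>R d \<in> polytopeP m v lam"
proof -
  have "\<forall>\<^sub>F t in at_right 0. 0 \<le> ell v lam j (p + t *\<^sub>R d)" if j: "j < m" for j
  proof (cases "ell v lam j p = 0")
    case True
    then show ?thesis
      using d[OF j True] eventually_at_right_less[of 0]
      by (auto simp: ell_add_scaleR elim!: eventually_mono)
  next
    case False
    with p j have "0 < ell v lam j p" by (auto simp: polytopeP_def less_le)
    moreover have "((\<lambda>t. ell v lam j (p + t *\<^sub>R d)) \<longlongrightarrow> ell v lam j p) (at_right 0)"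
      unfolding ell_add_scaleR by (auto intro!: tendsto_eq_intros)
    ultimately show ?thesis by (auto dest: order_tendstoD(1) elim!: eventually_mono)
  qed
  then have "\<forall>\<^sub>F t in at_right 0. 0 < t \<and> (\<forall>j\<in>{..<m}. 0 \<le> ell v lam j (p + t *\<^sub>R d))"
    by (auto intro!: eventually_conj eventually_at_right_less eventually_ball_finite)
  then obtain t where "0 < t" "\<forall>j\<in>{..<m}. 0 \<le> ell v lam j (p + t *\<^sub>R d)"
    using eventually_happens'[OF trivial_limit_at_right_real] by blast
  then show ?thesis using that by (auto simp: polytopeP_def)
qed

lemma wtP_ge:
  assumes "interior P \<noteq> {}" "\<And>u. u \<in> P \<Longrightarrow> c \<le> rvec f \<bullet> u"
  shows "c \<le> wtP P f"
  unfolding wtP_def using assms interior_subset by (auto intro!: cINF_greatest)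

lemma wtP_le:
  fixes P :: "(real^'n) set"
  assumes "convex P" "bounded P" "interior P \<noteq> {}" "p \<in> P"
  shows "wtP P f \<le> rvec f \<bullet> p"
proof (rule ccontr)
  let ?H = "{u. rvec f \<bullet> u < wtP P f}"
  assume "\<not> ?thesis"
  then have "p \<in> ?H \<inter> closure (interior P)"
    using assms closure_subset convex_closure_interior by fastforce
  then obtain u where u: "u \<in> interior P" "rvec f \<bullet> u < wtP P f"
    using open_Int_closure_eq_empty[OF open_halfspace_lt] by blast
  have "bounded ((\<lambda>u. rvec f \<bullet> u) ` interior P)"
    using assms(2) interior_subset bounded_linear_image bounded_linear_inner_right bounded_subset
    by metis
  then have "wtP P f \<le> rvec f \<bullet> u"
    unfolding wtP_def using u(1) by (intro cINF_lower bounded_imp_bdd_below)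
  with u(2) show False by simp
qed

lemma wtP_normal_combination_ge:
  assumes "interior (polytopeP m v lam) \<noteq> {}"
  shows "(\<Sum>j<m. real (F j) * lam j) \<le> wtP (polytopeP m v lam) (\<Sum>j<m. of_nat (F j) *s v j)"
proof (rule wtP_ge[OF assms])
  fix u assume "u \<in> polytopeP m v lam"
  then have "(\<Sum>j<m. real (F j) * lam j) \<le> (\<Sum>j<m. real (F j) * (rvec (v j) \<bullet> u))"
    by (intro sum_mono mult_left_mono) (auto simp: polytopeP_def ell_def)
  then show "(\<Sum>j<m. real (F j) * lam j) \<le> rvec (\<Sum>j<m. of_nat (F j) *s v j) \<bullet> u"
    by (simp add: inner_rvec_sum_smult)
qed

lemma extreme_point_minimizing_inner:
  fixes S :: "'a::euclidean_space set"
  assumes "compact S" "convex S" "S \<noteq> {}"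
  obtains p where "p extreme_point_of S" "\<And>y. y \<in> S \<Longrightarrow> a \<bullet> p \<le> a \<bullet> y"
proof -
  have "continuous_on S (\<lambda>u. a \<bullet> u)" by (intro continuous_intros)
  then obtain x0 where x0: "x0 \<in> S" "\<And>y. y \<in> S \<Longrightarrow> a \<bullet> x0 \<le> a \<bullet> y"
    using continuous_attains_inf[OF assms(1,3)] by blast
  define M where "M = S \<inter> {u. a \<bullet> u = a \<bullet> x0}"
  have face: "M face_of S"
    unfolding M_def using assms x0 by (intro face_of_Int_supporting_hyperplane_ge) auto
  have "compact M" "convex M" "M \<noteq> {}"
    using face_of_imp_compact[OF assms(2,1) face] face_of_imp_convex[OF face] x0
    by (auto simp: M_def)
  then obtain p where "p extreme_point_of M" using extreme_point_exists_convex by blast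
  then show ?thesis
    using that extreme_point_of_face[OF face] x0 by (auto simp: M_def extreme_point_of_def)
qed

lemma exists_dual_direction:
  fixes w :: "nat \<Rightarrow> 'a::euclidean_space"
  assumes "finite J" "card J \<le> DIM('a)" "span (w ` J) = UNIV" "k \<in> J"
  obtains d where "0 < w k \<bullet> d" "\<And>j. j \<in> J \<Longrightarrow> j \<noteq> k \<Longrightarrow> w j \<bullet> d = 0"
proof -
  have "card (w ` (J - {k})) < DIM('a)"
    using assms card_image_le[of "J - {k}" w] card_Diff1_less[of J k] by simp
  moreover have "DIM('a) \<le> card (w ` (J - {k}))" if "span (w ` (J - {k})) = UNIV"
    using dim_le_card[of UNIV "w ` (J - {k})"] that assms(1) by simp
  ultimately have "span (w ` (J - {k})) \<noteq> UNIV" by linarith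
  then obtain a where a: "a \<noteq> 0" "\<And>x. x \<in> span (w ` (J - {k})) \<Longrightarrow> a \<bullet> x = 0"
    using span_not_UNIV_orthogonal by blast
  have oth: "w j \<bullet> a = 0" if "j \<in> J" "j \<noteq> k" for j
    using a(2)[of "w j"] that by (simp add: span_base inner_commute)
  have "w k \<bullet> a \<noteq> 0"
  proof
    assume "w k \<bullet> a = 0"
    then have "orthogonal a y" if "y \<in> w ` J" for y
      using that oth by (auto simp: orthogonal_def inner_commute)
    then have "orthogonal a a" using orthogonal_to_span assms(3) by blast
    with a(1) show False by (simp add: orthogonal_def)
  qed
  then show ?thesis
  proof (intro that[of "(w k \<bullet> a) *\<^sub>R a"])
    show "0 < w k \<bullet> ((w k \<bullet> a) *\<^sub>R a)" if "w k \<bullet> a \<noteq> 0"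
      using that by (auto simp: zero_less_mult_iff linorder_neq_iff)
  qed (simp add: oth)
qed

lemma coeff_nonneg_at_minimizing_vertex:
  fixes v :: "nat \<Rightarrow> int^'n" and m :: nat and lam :: "nat \<Rightarrow> real" and p :: "real^'n"
  defines "J \<equiv> {j. j < m \<and> ell v lam j p = 0}"
  assumes p: "p \<in> polytopeP m v lam"
    and pmin: "\<And>y. y \<in> polytopeP m v lam \<Longrightarrow> rvec f \<bullet> p \<le> rvec f \<bullet> y"
    and card: "card J \<le> CARD('n)" and span: "span ((\<lambda>j. rvec (v j)) ` J) = UNIV"
    and f: "f = (\<Sum>j\<in>J. c j *s v j)" and k: "k \<in> J"
  shows "0 \<le> c k"
proof -
  have finJ: "finite J" by (simp add: J_def)
  obtain d where dk: "0 < rvec (v k) \<bullet> d" and doth: "\<And>j. j \<in> J \<Longrightarrow> j \<noteq> k \<Longrightarrow> rvec (v j) \<bullet> d = 0"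
    using exists_dual_direction[of J "\<lambda>j. rvec (v j)" k] finJ card span k by auto
  have "0 \<le> rvec (v j) \<bullet> d" if "j < m" "ell v lam j p = 0" for j
    using that dk doth[of j] by (cases "j = k") (auto simp: J_def)
  then obtain t where t: "0 < t" "p + t *\<^sub>R d \<in> polytopeP m v lam"
    using exists_step_into_polytopeP[OF p] by blast
  have "0 \<le> rvec f \<bullet> d"
    using pmin[OF t(2)] t(1) by (simp add: inner_add_right zero_le_mult_iff)
  also have "rvec f \<bullet> d = real_of_int (c k) * (rvec (v k) \<bullet> d)"
    unfolding f inner_rvec_sum_smult using finJ k doth by (subst sum.remove[of _ k]) auto
  finally show ?thesis using dk by (simp add: zero_le_mult_iff)
qed

lemma exists_normal_decomposition:
  fixes v :: "nat \<Rightarrow> int^'n"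
  assumes dz: "delzant m v lam"
  obtains F :: "nat \<Rightarrow> nat" where "(\<Sum>j<m. of_nat (F j) *s v j) = f"
    "wtP (polytopeP m v lam) f = (\<Sum>j<m. real (F j) * lam j)"
proof -
  let ?P = "polytopeP m v lam"
  have bP: "bounded ?P" and iP: "interior ?P \<noteq> {}" and
    vert: "\<And>p. p extreme_point_of ?P \<Longrightarrow>
          card {j. j < m \<and> ell v lam j p = 0} = CARD('n) \<and>
          (\<forall>x::int^'n. \<exists>c. x = (\<Sum>j\<in>{j. j < m \<and> ell v lam j p = 0}. c j *s v j))"
    using dz unfolding delzant_def Let_def by blast+
  have "compact ?P" using bP closed_polytopeP by (simp add: compact_eq_bounded_closed)
  moreover have "?P \<noteq> {}" using iP interior_subset by blast
  ultimately obtain p where pext: "p extreme_point_of ?P"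
    and pmin: "\<And>y. y \<in> ?P \<Longrightarrow> rvec f \<bullet> p \<le> rvec f \<bullet> y"
    using extreme_point_minimizing_inner convex_polytopeP by metis
  have pP: "p \<in> ?P" using pext by (simp add: extreme_point_of_def)
  define J where "J = {j. j < m \<and> ell v lam j p = 0}"
  have cardJ: "card J = CARD('n)" and spanJ: "\<And>x::int^'n. \<exists>c. x = (\<Sum>j\<in>J. c j *s v j)"
    using vert[OF pext] unfolding J_def by auto
  obtain c where c: "f = (\<Sum>j\<in>J. c j *s v j)" using spanJ by blast
  have cpos: "0 \<le> c j" if "j \<in> J" for j
    using coeff_nonneg_at_minimizing_vertex[OF pP pmin, of c j] span_rvec_eq_UNIV[OF spanJ]
      cardJ c that
    unfolding J_def by simp
  define F where "F j = (if j \<in> J then nat (c j) else 0)" for j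
  have "J \<subseteq> {..<m}" by (auto simp: J_def)
  then have sum_lessThan_eq: "(\<Sum>j<m. g j) = (\<Sum>j\<in>J. g j)" if "\<And>j. j \<notin> J \<Longrightarrow> g j = 0"
    for g :: "nat \<Rightarrow> 'a::comm_monoid_add"
    using that by (intro sum.mono_neutral_right) auto
  have "(\<Sum>j<m. of_nat (F j) *s v j) = f"
    unfolding c using cpos by (subst sum_lessThan_eq) (auto simp: F_def intro!: sum.cong)
  moreover have "(\<Sum>j<m. real (F j) * lam j) = rvec f \<bullet> p"
    unfolding c inner_rvec_sum_smult using cpos
    by (subst sum_lessThan_eq) (auto simp: F_def J_def ell_def intro!: sum.cong)
  moreover have "wtP ?P f \<le> rvec f \<bullet> p" by (rule wtP_le) (use convex_polytopeP bP iP pP in auto)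
  ultimately show ?thesis
    using that[of F] wtP_normal_combination_ge[OF iP, of F] by simp
qed

text \<open>\<open>mono_val P (\<mu>, E, f)\<close> is \<open>v\<^sub>T\<^sup>P\<close> of the monomial \<open>T\<^sup>\<mu> \<frak>w\<^sup>E y\<^sup>f\<close>.\<close>

definition mono_val :: "(real^'n) set \<Rightarrow> real \<times> (nat \<Rightarrow> int) \<times> (int^'n) \<Rightarrow> real" where
  "mono_val P k = fst k + wtP P (snd (snd k))"

lemma valP_le: "x k \<noteq> 0 \<Longrightarrow> valP P x \<le> ereal (mono_val P k)"
  unfolding valP_def mono_val_def by (rule INF_lower) simp

lemma valP_ge: "(\<And>k. x k \<noteq> 0 \<Longrightarrow> c \<le> ereal (mono_val P k)) \<Longrightarrow> c \<le> valP P x"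
  unfolding valP_def mono_val_def by (rule INF_greatest) simp

lemma mem_completion0P_iff:
  "x \<in> completion0P P m B \<longleftrightarrow>
     (\<forall>k. x k \<noteq> 0 \<longrightarrow> admissible_exp m B (fst (snd k))) \<and>
     (\<forall>C. finite {k. x k \<noteq> 0 \<and> mono_val P k \<le> C}) \<and> 0 \<le> valP P x"
  by (simp add: completion0P_def completionP_def mono_val_def)

lemma vT_le: "a l \<noteq> 0 \<Longrightarrow> vT a \<le> ereal l"
  unfolding vT_def by (rule INF_lower) simp

lemma finite_le_if_tendsto_PInfty:
  assumes "(g \<longlongrightarrow> \<infinity>) sequentially"
  shows "finite {k. g k \<le> ereal C}"
proof -
  obtain N where "\<And>k. k \<ge> N \<Longrightarrow> ereal C < g k"
    using assms by (auto simp: tendsto_PInfty eventually_sequentially)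
  then have "{k. g k \<le> ereal C} \<subseteq> {..<N}" by (auto simp: not_less[symmetric])
  then show ?thesis using finite_subset by blast
qed

lemma tendsto_valP_PInfty:
  assumes "\<And>r. \<exists>N. \<forall>n\<ge>N. \<forall>k. y n k \<noteq> 0 \<longrightarrow> r < mono_val P k"
  shows "((\<lambda>n. valP P (y n)) \<longlongrightarrow> \<infinity>) sequentially"
  unfolding tendsto_PInfty eventually_sequentially
proof
  fix r
  obtain N where N: "\<And>n k. n \<ge> N \<Longrightarrow> y n k \<noteq> 0 \<Longrightarrow> r + 1 < mono_val P k"
    using assms[of "r + 1"] by blast
  have "ereal (r + 1) \<le> valP P (y n)" if "n \<ge> N" for n
    using N[OF that] by (intro valP_ge) (simp add: less_imp_le)
  moreover have "ereal r < ereal (r + 1)" by simp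
  ultimately show "\<exists>N. \<forall>n\<ge>N. ereal r < valP P (y n)"
    using less_le_trans by blast
qed

subsection \<open>Series of z-monomials converge in \<open>\<Lambda>\<^sub>0\<^sup>P\<close>\<close>

lemma series_term_nonzero_iff:
  "series_term m v lam c E F k \<noteq> 0 \<longleftrightarrow>
     snd k = (E, \<Sum>j<m. of_nat (F j) *s v j) \<and> c (fst k + (\<Sum>j<m. real (F j) * lam j)) \<noteq> 0"
  by (cases k) (auto simp: series_term_def)

lemma vT_le_mono_val_series_term:
  assumes "interior (polytopeP m v lam) \<noteq> {}" "series_term m v lam c E F k \<noteq> 0"
  shows "vT c \<le> ereal (mono_val (polytopeP m v lam) k)"
proof -
  from assms(2) have k: "snd k = (E, \<Sum>j<m. of_nat (F j) *s v j)"
    and nz: "c (fst k + (\<Sum>j<m. real (F j) * lam j)) \<noteq> 0"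
    by (auto simp: series_term_nonzero_iff)
  have "fst k + (\<Sum>j<m. real (F j) * lam j) \<le> mono_val (polytopeP m v lam) k"
    using wtP_normal_combination_ge[OF assms(1), of F] k by (simp add: mono_val_def)
  then show ?thesis using vT_le[of c, OF nz] order_trans ereal_less_eq(3) by blast
qed

text \<open>The sum is taken coefficientwise. Its index set is finite by
  \<open>finite_series_term_support\<close>; for an infinite one \<open>\<Sum>\<close> would return the junk value 0.\<close>

definition series_sum :: "nat \<Rightarrow> (nat \<Rightarrow> int^'n) \<Rightarrow> (nat \<Rightarrow> real) \<Rightarrow> (nat \<Rightarrow> real \<Rightarrow> 'r::ab_group_add) \<Rightarrow>
    (nat \<Rightarrow> nat \<Rightarrow> int) \<Rightarrow> (nat \<Rightarrow> nat \<Rightarrow> nat) \<Rightarrow> real \<times> (nat \<Rightarrow> int) \<times> (int^'n) \<Rightarrow> 'r" where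
  "series_sum m v lam a E F k =
     (\<Sum>i | series_term m v lam (a i) (E i) (F i) k \<noteq> 0. series_term m v lam (a i) (E i) (F i) k)"

context
  fixes m B :: nat and v :: "nat \<Rightarrow> int^'n" and lam :: "nat \<Rightarrow> real"
    and a :: "nat \<Rightarrow> real \<Rightarrow> 'r::ab_group_add" and E :: "nat \<Rightarrow> nat \<Rightarrow> int"
  assumes int: "interior (polytopeP m v lam) \<noteq> {}" and sd: "series_data m B a E"
begin

private lemma vT_tendsto: "((\<lambda>i. vT (a i)) \<longlongrightarrow> \<infinity>) sequentially"
  using sd by (simp add: series_data_def)

lemma finite_series_term_support:
  "finite {i. series_term m v lam (a i) (E i) (F i) k \<noteq> 0}"
  by (rule finite_subset[OF _ finite_le_if_tendsto_PInfty[OF vT_tendsto]])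
    (use vT_le_mono_val_series_term[OF int] in blast)

lemma series_sum_remainder_nonzero:
  assumes "series_sum m v lam a E F k - (\<Sum>i<N. series_term m v lam (a i) (E i) (F i) k) \<noteq> 0"
  obtains i where "N \<le> i" "series_term m v lam (a i) (E i) (F i) k \<noteq> 0"
proof -
  let ?S = "{i. series_term m v lam (a i) (E i) (F i) k \<noteq> 0}"
  have "(\<Sum>i<N. series_term m v lam (a i) (E i) (F i) k) =
        (\<Sum>i\<in>?S \<inter> {..<N}. series_term m v lam (a i) (E i) (F i) k)"
    by (intro sum.mono_neutral_right) auto
  then have "series_sum m v lam a E F k - (\<Sum>i<N. series_term m v lam (a i) (E i) (F i) k) =
        (\<Sum>i\<in>?S - {..<N}. series_term m v lam (a i) (E i) (F i) k)"
    unfolding series_sum_def using finite_series_term_support[of F k]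
    by (metis (no_types, lifting) add_diff_cancel_left' sum.Int_Diff)
  with assms that show ?thesis by (metis (no_types, lifting) Diff_iff lessThan_iff
      mem_Collect_eq not_less sum.neutral)
qed

lemma series_sum_nonzero:
  assumes "series_sum m v lam a E F k \<noteq> 0"
  obtains i where "series_term m v lam (a i) (E i) (F i) k \<noteq> 0"
  using series_sum_remainder_nonzero[where F = F and k = k and N = 0] assms that by auto

lemma series_sum_mem_completion0P:
  "series_sum m v lam a E F \<in> completion0P (polytopeP m v lam) m B"
  unfolding mem_completion0P_iff
proof (intro conjI allI impI)
  fix k assume "series_sum m v lam a E F k \<noteq> 0"
  then obtain i where "series_term m v lam (a i) (E i) (F i) k \<noteq> 0"
    by (rule series_sum_nonzero)
  then show "admissible_exp m B (fst (snd k))"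
    using sd by (auto simp: series_term_nonzero_iff series_data_def)
next
  fix C
  let ?P = "polytopeP m v lam"
  let ?c = "\<lambda>i. \<Sum>j<m. real (F i j) * lam j" and ?f = "\<lambda>i. \<Sum>j<m. of_nat (F i j) *s v j"
  let ?U = "\<Union>i\<in>{i. vT (a i) \<le> ereal C}. (\<lambda>l. (l - ?c i, E i, ?f i)) ` {l. a i l \<noteq> 0 \<and> l \<le> C}"
  have "{k. series_sum m v lam a E F k \<noteq> 0 \<and> mono_val ?P k \<le> C} \<subseteq> ?U"
  proof safe
    fix k assume nz: "series_sum m v lam a E F k \<noteq> 0" and le: "mono_val ?P k \<le> C"
    obtain i where t: "series_term m v lam (a i) (E i) (F i) k \<noteq> 0"
      using series_sum_nonzero[OF nz] .
    then have s: "snd k = (E i, ?f i)" and anz: "a i (fst k + ?c i) \<noteq> 0"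
      by (auto simp: series_term_nonzero_iff)
    have "fst k + ?c i \<le> C"
      using wtP_normal_combination_ge[OF int, of "F i"] le s by (simp add: mono_val_def)
    moreover have "vT (a i) \<le> ereal C"
    proof -
      have "vT (a i) \<le> ereal (mono_val ?P k)" by (rule vT_le_mono_val_series_term[OF int t])
      also have "\<dots> \<le> ereal C" using le by simp
      finally show ?thesis .
    qed
    moreover have "k = (fst k + ?c i - ?c i, E i, ?f i)" using s by (cases k) auto
    ultimately show "k \<in> ?U" using anz by blast
  qed
  moreover have "finite ?U"
  proof (intro finite_UN_I finite_imageI)
    show "finite {i. vT (a i) \<le> ereal C}" by (rule finite_le_if_tendsto_PInfty[OF vT_tendsto])
    show "finite {l. a i l \<noteq> 0 \<and> l \<le> C}" for i
      using sd by (simp add: series_data_def novikov_def)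
  qed
  ultimately show "finite {k. series_sum m v lam a E F k \<noteq> 0 \<and> mono_val ?P k \<le> C}"
    by (rule finite_subset)
next
  show "0 \<le> valP (polytopeP m v lam) (series_sum m v lam a E F)"
  proof (rule valP_ge)
    fix k assume "series_sum m v lam a E F k \<noteq> 0"
    then obtain i where t: "series_term m v lam (a i) (E i) (F i) k \<noteq> 0"
      by (rule series_sum_nonzero)
    have "0 \<le> vT (a i)" using sd by (simp add: series_data_def)
    also have "\<dots> \<le> ereal (mono_val (polytopeP m v lam) k)"
      by (rule vT_le_mono_val_series_term[OF int t])
    finally show "0 \<le> ereal (mono_val (polytopeP m v lam) k)" .
  qed
qed

lemma series_converges_to_series_sum:
  "series_converges_to (polytopeP m v lam) m v lam a E F (series_sum m v lam a E F)"
  unfolding series_converges_to_def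
proof (rule tendsto_valP_PInfty)
  fix r
  obtain N where N: "\<And>i. N \<le> i \<Longrightarrow> ereal r < vT (a i)"
    using vT_tendsto by (auto simp: tendsto_PInfty eventually_sequentially)
  have "r < mono_val (polytopeP m v lam) k"
    if n: "n \<ge> N" and rem: "series_sum m v lam a E F k - (\<Sum>i<n. series_term m v lam (a i) (E i) (F i) k) \<noteq> 0"
    for n k
  proof -
    obtain i where i: "n \<le> i" "series_term m v lam (a i) (E i) (F i) k \<noteq> 0"
      using series_sum_remainder_nonzero[OF rem] .
    have "ereal r < vT (a i)" using N i(1) n by simp
    also have "\<dots> \<le> ereal (mono_val (polytopeP m v lam) k)"
      using vT_le_mono_val_series_term[OF int i(2)] .
    finally show ?thesis by simp
  qed
  then show "\<exists>N. \<forall>n\<ge>N. \<forall>k. series_sum m v lam a E F k -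
               (\<Sum>i<n. series_term m v lam (a i) (E i) (F i) k) \<noteq> 0 \<longrightarrow> r < mono_val (polytopeP m v lam) k"
    by blast
qed

end

subsection \<open>Every element of \<open>\<Lambda>\<^sub>0\<^sup>P\<close> is such a series\<close>

definition novikov_monomial :: "real \<Rightarrow> 'r::zero \<Rightarrow> real \<Rightarrow> 'r" where
  "novikov_monomial l0 c = (\<lambda>l. if l = l0 then c else 0)"

lemma novikov_novikov_monomial: "novikov (novikov_monomial l0 c)"
  unfolding novikov_def novikov_monomial_def
  by (auto intro: finite_subset[of _ "{l0}"])

lemma vT_novikov_monomial: "vT (novikov_monomial l0 c) = (if c = 0 then \<infinity> else ereal l0)"
  by (simp add: vT_def novikov_monomial_def top_ereal_def)

lemma series_term_novikov_monomial:
  "series_term m v lam (novikov_monomial (mu + (\<Sum>j<m. real (F j) * lam j)) c) E F =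
     (\<lambda>k. if k = (mu, E, \<Sum>j<m. of_nat (F j) *s v j) then c else 0)"
  by (auto simp: series_term_def novikov_monomial_def fun_eq_iff)

lemma countable_support_completionP:
  assumes "x \<in> completionP P m B"
  shows "countable {k. x k \<noteq> 0}"
proof (rule countable_subset)
  show "{k. x k \<noteq> 0} \<subseteq> (\<Union>n::nat. {k. x k \<noteq> 0 \<and> mono_val P k \<le> real n})"
    using real_arch_simple by blast
  have "finite {k. x k \<noteq> 0 \<and> mono_val P k \<le> C}" for C
    using assms by (simp add: completionP_def mono_val_def)
  then show "countable (\<Union>n::nat. {k. x k \<noteq> 0 \<and> mono_val P k \<le> real n})"
    by (intro countable_UN countableI_type countable_finite)
qed

lemma exists_index_bound:
  fixes idx :: "'a \<Rightarrow> nat" and g :: "'a \<Rightarrow> real"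
  assumes "finite {k \<in> S. g k \<le> r}"
  obtains N where "\<And>k. k \<in> S \<Longrightarrow> N \<le> idx k \<Longrightarrow> r < g k"
proof -
  obtain N where N: "idx ` {k \<in> S. g k \<le> r} \<subseteq> {..<N}"
    using finite_nat_bounded assms by blast
  show ?thesis
  proof (rule that)
    fix k assume k: "k \<in> S" "N \<le> idx k"
    show "r < g k"
    proof (rule ccontr)
      assume "\<not> r < g k"
      then have "idx k \<in> {..<N}" using N k(1) by (auto simp: not_less)
      with k(2) show False by simp
    qed
  qed
qed

text \<open>The \<open>i\<close>-th term of the series is the monomial of \<open>x\<close> with index \<open>i\<close> in an
  enumeration of the support, rewritten in the variables \<open>z\<close> by means of a choice \<open>Fo\<close>
  of decompositions as in \<open>exists_normal_decomposition\<close>; its valuation is then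
  \<open>v\<^sub>T\<^sup>P\<close> of that monomial.\<close>

context
  fixes m B :: nat and v :: "nat \<Rightarrow> int^'n" and lam :: "nat \<Rightarrow> real"
    and x :: "real \<times> (nat \<Rightarrow> int) \<times> (int^'n) \<Rightarrow> 'r::ab_group_add"
    and Fo :: "int^'n \<Rightarrow> nat \<Rightarrow> nat"
  assumes x: "x \<in> completion0P (polytopeP m v lam) m B"
    and Fo_sum: "\<And>f. (\<Sum>j<m. of_nat (Fo f j) *s v j) = f"
    and Fo_wtP: "\<And>f. wtP (polytopeP m v lam) f = (\<Sum>j<m. real (Fo f j) * lam j)"
begin

private abbreviation "S \<equiv> {k. x k \<noteq> 0}"
private abbreviation "idx \<equiv> to_nat_on S"
private abbreviation "key \<equiv> from_nat_into S"

definition enum_coeff :: "nat \<Rightarrow> real \<Rightarrow> 'r" where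
  "enum_coeff i = novikov_monomial (mono_val (polytopeP m v lam) (key i))
     (if i \<in> idx ` S then x (key i) else 0)"

definition enum_wexp :: "nat \<Rightarrow> nat \<Rightarrow> int" where
  "enum_wexp i = (if i \<in> idx ` S then fst (snd (key i)) else (\<lambda>_. 0))"

definition enum_zexp :: "nat \<Rightarrow> nat \<Rightarrow> nat" where
  "enum_zexp i = Fo (snd (snd (key i)))"

private lemma key_idx: "k \<in> S \<Longrightarrow> key (idx k) = k"
proof -
  have "countable S" using x countable_support_completionP by (auto simp: completion0P_def)
  then show "k \<in> S \<Longrightarrow> key (idx k) = k" by simp
qed

private lemma key_mem: "i \<in> idx ` S \<Longrightarrow> key i \<in> S \<and> idx (key i) = i"
  using key_idx by auto

private lemma index_bound_mono_val: obtains N where "\<And>k. k \<in> S \<Longrightarrow> N \<le> idx k \<Longrightarrow> r < mono_val (polytopeP m v lam) k"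
proof -
  have "finite {k \<in> S. mono_val (polytopeP m v lam) k \<le> r}"
    using x by (simp add: mem_completion0P_iff)
  from exists_index_bound[where idx = idx, OF this] that show ?thesis by blast
qed

lemma series_term_enum:
  "series_term m v lam (enum_coeff i) (enum_wexp i) (enum_zexp i) =
     (\<lambda>k. if k \<in> S \<and> idx k = i then x k else 0)"
proof -
  have "enum_coeff i = novikov_monomial (fst (key i) + (\<Sum>j<m. real (enum_zexp i j) * lam j))
      (if i \<in> idx ` S then x (key i) else 0)"
    by (simp add: enum_coeff_def mono_val_def enum_zexp_def Fo_wtP)
  then have st: "series_term m v lam (enum_coeff i) (enum_wexp i) (enum_zexp i) =
      (\<lambda>k. if k = (fst (key i), enum_wexp i, snd (snd (key i)))
           then (if i \<in> idx ` S then x (key i) else 0) else 0)"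
    by (simp add: series_term_novikov_monomial enum_zexp_def Fo_sum)
  show ?thesis
  proof (cases "i \<in> idx ` S")
    case True
    then have K: "(fst (key i), enum_wexp i, snd (snd (key i))) = key i"
      by (simp add: enum_wexp_def)
    have iff: "k = key i \<longleftrightarrow> k \<in> S \<and> idx k = i" for k
      using True key_idx key_mem by metis
    show ?thesis unfolding st K
    proof
      show "(if k = key i then (if i \<in> idx ` S then x (key i) else 0) else 0) =
            (if k \<in> S \<and> idx k = i then x k else 0)" for k
        using iff[of k] True by auto
    qed
  next
    case False
    then have "\<And>k. \<not> (k \<in> S \<and> idx k = i)" by auto
    with False show ?thesis unfolding st by (intro ext) auto
  qed
qed

lemma vT_enum_coeff:
  "vT (enum_coeff i) = (if i \<in> idx ` S then ereal (mono_val (polytopeP m v lam) (key i)) else \<infinity>)"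
  using key_mem[of i] by (auto simp: enum_coeff_def vT_novikov_monomial)

lemma series_data_enum: "series_data m B enum_coeff enum_wexp"
  unfolding series_data_def
proof (intro conjI allI)
  fix i
  show "novikov (enum_coeff i)" by (simp add: enum_coeff_def novikov_novikov_monomial)
  show "0 \<le> vT (enum_coeff i)"
  proof (cases "i \<in> idx ` S")
    case True
    have "0 \<le> valP (polytopeP m v lam) x" using x by (simp add: mem_completion0P_iff)
    also have "\<dots> \<le> ereal (mono_val (polytopeP m v lam) (key i))"
      using key_mem[OF True] by (intro valP_le) simp
    finally show ?thesis using True by (simp add: vT_enum_coeff)
  qed (simp add: vT_enum_coeff)
  show "admissible_exp m B (enum_wexp i)"
  proof (cases "i \<in> idx ` S")
    case True
    then have "x (key i) \<noteq> 0" using key_mem by blast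
    with x True show ?thesis
      by (simp add: mem_completion0P_iff enum_wexp_def del: split_paired_All)
  qed (simp add: enum_wexp_def admissible_exp_def)
next
  show "((\<lambda>i. vT (enum_coeff i)) \<longlongrightarrow> \<infinity>) sequentially"
    unfolding tendsto_PInfty eventually_sequentially
  proof
    fix r
    obtain N where N: "\<And>k. k \<in> S \<Longrightarrow> N \<le> idx k \<Longrightarrow> r < mono_val (polytopeP m v lam) k"
      using index_bound_mono_val by blast
    have "ereal r < vT (enum_coeff i)" if "N \<le> i" for i
      using N[of "key i"] that key_mem[of i] by (simp add: vT_enum_coeff)
    then show "\<exists>N. \<forall>i\<ge>N. ereal r < vT (enum_coeff i)" by blast
  qed
qed

lemma series_converges_to_enum:
  "series_converges_to (polytopeP m v lam) m v lam enum_coeff enum_wexp enum_zexp x"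
proof -
  have partial_sum: "(\<Sum>i<n. series_term m v lam (enum_coeff i) (enum_wexp i) (enum_zexp i) k) =
      (if k \<in> S \<and> idx k < n then x k else 0)" for n k
    unfolding series_term_enum by (cases "k \<in> S") (simp_all add: sum.delta')
  show ?thesis
    unfolding series_converges_to_def partial_sum
  proof (rule tendsto_valP_PInfty)
    fix r
    obtain N where N: "\<And>k. k \<in> S \<Longrightarrow> N \<le> idx k \<Longrightarrow> r < mono_val (polytopeP m v lam) k"
      using index_bound_mono_val by blast
    have "r < mono_val (polytopeP m v lam) k"
      if n: "N \<le> n" and rem: "x k - (if k \<in> S \<and> idx k < n then x k else 0) \<noteq> 0" for n k
    proof -
      from rem have "k \<in> S" "n \<le> idx k" by (auto split: if_splits)
      with N n show ?thesis by simp
    qed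
    then show "\<exists>N. \<forall>n\<ge>N. \<forall>k. x k - (if k \<in> S \<and> idx k < n then x k else 0) \<noteq> 0 \<longrightarrow>
                 r < mono_val (polytopeP m v lam) k"
      by blast
  qed
qed

end

lemma exists_series_representation:
  fixes x :: "real \<times> (nat \<Rightarrow> int) \<times> (int^'n) \<Rightarrow> 'r::ab_group_add"
  assumes dz: "delzant m v lam" and x: "x \<in> completion0P (polytopeP m v lam) m B"
  shows "\<exists>a E F. series_data m B a E \<and> series_converges_to (polytopeP m v lam) m v lam a E F x"
proof -
  have "\<forall>f. \<exists>G. (\<Sum>j<m. of_nat (G j) *s v j) = f \<and>
      wtP (polytopeP m v lam) f = (\<Sum>j<m. real (G j) * lam j)"
    using exists_normal_decomposition[OF dz] by blast
  then obtain Fo where "\<And>f. (\<Sum>j<m. of_nat (Fo f j) *s v j) = f"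
    "\<And>f. wtP (polytopeP m v lam) f = (\<Sum>j<m. real (Fo f j) * lam j)"
    by metis
  then show ?thesis
    using series_data_enum[OF x] series_converges_to_enum[OF x] by blast
qed

theorem lemma3p9:
  fixes v :: "nat \<Rightarrow> int^'n" and lam :: "nat \<Rightarrow> real" and m B :: nat
  assumes "delzant m v lam" and "m \<le> B"
  shows "(\<forall>(a :: nat \<Rightarrow> real \<Rightarrow> 'r::field_char_0) E F. series_data m B a E \<longrightarrow>
            (\<exists>x\<in>completion0P (polytopeP m v lam) m B.
               series_converges_to (polytopeP m v lam) m v lam a E F x))
       \<and> (\<forall>x :: real \<times> (nat \<Rightarrow> int) \<times> (int^'n) \<Rightarrow> 'r. x \<in> completion0P (polytopeP m v lam) m B \<longrightarrow>
            (\<exists>a E F. series_data m B a E \<and>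
               series_converges_to (polytopeP m v lam) m v lam a E F x))"
proof (intro conjI allI impI)
  have int: "interior (polytopeP m v lam) \<noteq> {}"
    using assms(1) by (simp add: delzant_def Let_def)
  fix a :: "nat \<Rightarrow> real \<Rightarrow> 'r" and E F
  assume "series_data m B a E"
  then show "\<exists>x\<in>completion0P (polytopeP m v lam) m B.
               series_converges_to (polytopeP m v lam) m v lam a E F x"
    using series_sum_mem_completion0P series_converges_to_series_sum int by blast
next
  fix x :: "real \<times> (nat \<Rightarrow> int) \<times> (int^'n) \<Rightarrow> 'r"
  assume "x \<in> completion0P (polytopeP m v lam) m B"
  then show "\<exists>a E F. series_data m B a E \<and> series_converges_to (polytopeP m v lam) m v lam a E F x"
    using exists_series_representation assms(1) by blast
qed

end
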